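(* Let $(G,k)$ be an instance and let $v\in V$ satisfy $|N(v)|>7k$ and $\rho(v)> \frac{|N(v)|(|N(v)|-1)}{4}$. Then for every feasible solution $X$ with $v\notin X$, the connected component of $G-X$ containing $v$ is a clique.
   Context: Graphs are undirected, without self-loops, possibly with multi-edges. $N(v)$ is the set of vertices adjacent to $v$; $\rho(v)$ is the number of unordered pairs $\{u_1,u_2\}\subseteq N(v)$ joined by at least one edge (parallel edges counted once). A vertex set induces a clique if between any two distinct vertices of it there is exactly one edge, and a tree if it is connected and has no cycle (two parallel edges form a cycle). For an integer $k\ge1$, a feasible solution is a set $X\subseteq V$ with $|X|\le k$ such that every connected component of $G-X$ is a clique or a tree. *)

theory Defs
  imports Complex_Main
begin

definition multigraph :: "'a set \<Rightarrow> ('a \<Rightarrow> 'a \<Rightarrow> nat) \<Rightarrow> bool" where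
  "multigraph V m \<longleftrightarrow> finite V \<and> (\<forall>x y. m x y = m y x) \<and> (\<forall>x. m x x = 0)
     \<and> (\<forall>x y. m x y > 0 \<longrightarrow> x \<in> V \<and> y \<in> V)"

definition nbrs :: "'a set \<Rightarrow> ('a \<Rightarrow> 'a \<Rightarrow> nat) \<Rightarrow> 'a \<Rightarrow> 'a set" where
  "nbrs V m v = {u \<in> V. m v u > 0}"

definition rho :: "'a set \<Rightarrow> ('a \<Rightarrow> 'a \<Rightarrow> nat) \<Rightarrow> 'a \<Rightarrow> nat" where
  "rho V m v = card {{u1, u2} | u1 u2. u1 \<in> nbrs V m v \<and> u2 \<in> nbrs V m v \<and> u1 \<noteq> u2 \<and> m u1 u2 > 0}"

definition is_clique :: "('a \<Rightarrow> 'a \<Rightarrow> nat) \<Rightarrow> 'a set \<Rightarrow> bool" where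
  "is_clique m S \<longleftrightarrow> (\<forall>x\<in>S. \<forall>y\<in>S. x \<noteq> y \<longrightarrow> m x y = 1)"

definition adj_in :: "('a \<Rightarrow> 'a \<Rightarrow> nat) \<Rightarrow> 'a set \<Rightarrow> 'a \<Rightarrow> 'a \<Rightarrow> bool" where
  "adj_in m S x y \<longleftrightarrow> x \<in> S \<and> y \<in> S \<and> m x y > 0"

definition connected_in :: "('a \<Rightarrow> 'a \<Rightarrow> nat) \<Rightarrow> 'a set \<Rightarrow> bool" where
  "connected_in m S \<longleftrightarrow> S \<noteq> {} \<and> (\<forall>x\<in>S. \<forall>y\<in>S. (adj_in m S)\<^sup>*\<^sup>* x y)"

definition has_cycle_in :: "('a \<Rightarrow> 'a \<Rightarrow> nat) \<Rightarrow> 'a set \<Rightarrow> bool" where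
  "has_cycle_in m S \<longleftrightarrow>
     (\<exists>x\<in>S. \<exists>y\<in>S. m x y \<ge> 2) \<or>
     (\<exists>xs. length xs \<ge> 3 \<and> distinct xs \<and> set xs \<subseteq> S \<and>
          (\<forall>i < length xs. m (xs ! i) (xs ! ((i + 1) mod length xs)) > 0))"

definition is_tree :: "('a \<Rightarrow> 'a \<Rightarrow> nat) \<Rightarrow> 'a set \<Rightarrow> bool" where
  "is_tree m S \<longleftrightarrow> connected_in m S \<and> \<not> has_cycle_in m S"

definition component :: "('a \<Rightarrow> 'a \<Rightarrow> nat) \<Rightarrow> 'a set \<Rightarrow> 'a \<Rightarrow> 'a set" where
  "component m S v = {u \<in> S. (adj_in m S)\<^sup>*\<^sup>* v u}"

definition feasible :: "'a set \<Rightarrow> ('a \<Rightarrow> 'a \<Rightarrow> nat) \<Rightarrow> nat \<Rightarrow> 'a set \<Rightarrow> bool" where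
  "feasible V m k X \<longleftrightarrow> X \<subseteq> V \<and> card X \<le> k \<and>
     (\<forall>w \<in> V - X. is_clique m (component m (V - X) w) \<or> is_tree m (component m (V - X) w))"

end

theory Submission
  imports Defs
begin

text \<open>If the component of \<open>v\<close> in \<open>G - X\<close> were not a clique, it would be a tree. Then no two
neighbours of \<open>v\<close> outside \<open>X\<close> are adjacent (they would close a triangle with \<open>v\<close>), so every
edge among the neighbours has an endpoint in \<open>X\<close>, and \<open>\<rho>(v) \<le> |X| (|N(v)| - 1) \<le> k (|N(v)| - 1)\<close>.
Since \<open>|N(v)| > 4k\<close>, this is at most \<open>|N(v)| (|N(v)| - 1) / 4\<close>, contradicting the density of
\<open>N(v)\<close>.\<close>

lemma has_cycle_in_triangle:
  assumes "x \<in> S" "y \<in> S" "z \<in> S" "distinct [x, y, z]"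
    and "m x y > 0" "m y z > 0" "m z x > 0"
  shows "has_cycle_in m S"
proof -
  let ?xs = "[x, y, z]"
  have "\<forall>i < length ?xs. m (?xs ! i) (?xs ! ((i + 1) mod length ?xs)) > 0"
  proof (intro allI impI)
    fix i assume "i < length ?xs"
    then have "i = 0 \<or> i = 1 \<or> i = 2" by auto
    then show "m (?xs ! i) (?xs ! ((i + 1) mod length ?xs)) > 0" using assms(5-7) by auto
  qed
  then show ?thesis
    unfolding has_cycle_in_def using assms(1-4) by (intro disjI2 exI[of _ ?xs]) simp
qed

lemma component_self: "v \<in> S \<Longrightarrow> v \<in> component m S v"
  unfolding component_def by simp

lemma adjacent_in_component:
  "v \<in> S \<Longrightarrow> u \<in> S \<Longrightarrow> m v u > 0 \<Longrightarrow> u \<in> component m S v"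
  unfolding component_def adj_in_def by auto

lemma nbrs_nonadjacent_if_acyclic_component:
  assumes "multigraph V m" and "\<not> has_cycle_in m (component m S v)"
    and "v \<in> S" "u1 \<in> S" "u2 \<in> S" "u1 \<noteq> u2" "m v u1 > 0" "m v u2 > 0"
  shows "m u1 u2 = 0"
proof (rule ccontr)
  assume "m u1 u2 \<noteq> 0"
  have sym: "m u2 v = m v u2" and loopless: "m v v = 0"
    using assms(1) unfolding multigraph_def by auto
  have "distinct [v, u1, u2]"
    using assms(6-8) loopless by auto
  moreover have "v \<in> component m S v" "u1 \<in> component m S v" "u2 \<in> component m S v"
    using assms(3-5,7,8) component_self adjacent_in_component by metis+
  ultimately have "has_cycle_in m (component m S v)"
    using has_cycle_in_triangle[of v _ u1 u2 m] \<open>m u1 u2 \<noteq> 0\<close> assms(7,8) sym by simp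
  with assms(2) show False ..
qed

lemma card_edges_le_vertex_cover:
  assumes "finite N"
    and cover: "\<And>u1 u2. u1 \<in> N \<Longrightarrow> u2 \<in> N \<Longrightarrow> u1 \<noteq> u2 \<Longrightarrow> R u1 u2 \<Longrightarrow> u1 \<in> Y \<or> u2 \<in> Y"
  shows "card {{u1, u2} | u1 u2. u1 \<in> N \<and> u2 \<in> N \<and> u1 \<noteq> u2 \<and> R u1 u2}
           \<le> card (Y \<inter> N) * (card N - 1)"
proof -
  let ?E = "{{u1, u2} | u1 u2. u1 \<in> N \<and> u2 \<in> N \<and> u1 \<noteq> u2 \<and> R u1 u2}"
  let ?star = "\<lambda>x. (\<lambda>u. {x, u}) ` (N - {x})"
  have "?E \<subseteq> (\<Union>x\<in>Y \<inter> N. ?star x)"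
  proof
    fix e assume "e \<in> ?E"
    then obtain u1 u2 where e: "e = {u1, u2}" "u1 \<in> N" "u2 \<in> N" "u1 \<noteq> u2" "R u1 u2"
      by blast
    from cover[OF e(2-5)] show "e \<in> (\<Union>x\<in>Y \<inter> N. ?star x)"
      using e(1-4) by (auto simp: insert_commute)
  qed
  then have "card ?E \<le> card (\<Union>x\<in>Y \<inter> N. ?star x)"
    by (intro card_mono) (use assms(1) in auto)
  also have "\<dots> \<le> (\<Sum>x\<in>Y \<inter> N. card (?star x))"
    using assms(1) by (intro card_UN_le) simp
  also have "\<dots> \<le> (\<Sum>x\<in>Y \<inter> N. card N - 1)"
  proof (rule sum_mono)
    fix x assume "x \<in> Y \<inter> N"
    then have "card (N - {x}) = card N - 1" using assms(1) by simp
    then show "card (?star x) \<le> card N - 1"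
      using card_image_le[of "N - {x}"] assms(1) by (metis finite_Diff)
  qed
  finally show ?thesis by simp
qed

lemma rho_le_if_acyclic_component:
  assumes "multigraph V m" and "X \<subseteq> V" and "v \<in> V - X"
    and "\<not> has_cycle_in m (component m (V - X) v)"
  shows "rho V m v \<le> card X * (card (nbrs V m v) - 1)"
proof -
  let ?N = "nbrs V m v"
  have "finite V" using assms(1) unfolding multigraph_def by simp
  then have fin: "finite ?N" "finite X"
    using assms(2) finite_subset unfolding nbrs_def by auto
  have "u1 \<in> X \<or> u2 \<in> X" if "u1 \<in> ?N" "u2 \<in> ?N" "u1 \<noteq> u2" "m u1 u2 > 0" for u1 u2
    using nbrs_nonadjacent_if_acyclic_component[OF assms(1,4), of u1 u2] assms(3) that
    unfolding nbrs_def by auto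
  then have "rho V m v \<le> card (X \<inter> ?N) * (card ?N - 1)"
    unfolding rho_def by (intro card_edges_le_vertex_cover fin(1))
  also have "\<dots> \<le> card X * (card ?N - 1)"
    using fin(2) by (intro mult_le_mono1 card_mono) auto
  finally show ?thesis .
qed

lemma real_le_quarter_if_le_mult_pred:
  assumes "r \<le> k * (d - 1)" and "4 * k < d"
  shows "real r \<le> real d * (real d - 1) / 4"
proof -
  have "real r \<le> real (k * (d - 1))"
    using assms(1) by (simp only: of_nat_le_iff)
  also have "\<dots> = real k * (real d - 1)"
    using assms(2) by (simp add: of_nat_diff)
  also have "\<dots> \<le> real d * (real d - 1) / 4"
  proof -
    have "4 * real k * (real d - 1) \<le> real d * (real d - 1)"
      using assms(2) by (intro mult_right_mono) simp_all
    then show ?thesis by simp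
  qed
  finally show ?thesis .
qed

theorem mainTheorem4:
  fixes V :: "'a set" and m :: "'a \<Rightarrow> 'a \<Rightarrow> nat" and k :: nat and v :: 'a and X :: "'a set"
  assumes "multigraph V m" and "k \<ge> 1" and "v \<in> V"
    and "card (nbrs V m v) > 7 * k"
    and "real (rho V m v) > real (card (nbrs V m v)) * (real (card (nbrs V m v)) - 1) / 4"
    and "feasible V m k X" and "v \<notin> X"
  shows "is_clique m (component m (V - X) v)"
proof (rule ccontr)
  assume "\<not> is_clique m (component m (V - X) v)"
  define d where "d = card (nbrs V m v)"
  have "X \<subseteq> V" "card X \<le> k" "is_tree m (component m (V - X) v)"
    using assms(3,6,7) \<open>\<not> is_clique _ _\<close> unfolding feasible_def by auto
  then have "rho V m v \<le> card X * (d - 1)"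
    unfolding d_def is_tree_def
    using rho_le_if_acyclic_component[OF assms(1)] assms(3,7) by blast
  also have "\<dots> \<le> k * (d - 1)"
    using \<open>card X \<le> k\<close> by simp
  finally have "real (rho V m v) \<le> real d * (real d - 1) / 4"
    by (rule real_le_quarter_if_le_mult_pred) (use assms(4) d_def in simp)
  then show False
    using assms(5) unfolding d_def by simp
qed

end
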